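(* For generic $x_0,x_1,\dots,x_L$, the six-vertex partition function with domain-wall boundaries satisfies, for every $0\le l\le L$, \[ \sum_{i=0}^L\sigma_i^{(l)}\,Z(X_i^0)=0, \] where $X_0^0:=X$ and \[ \sigma_i^{(l)}=\begin{cases}\dfrac{c(x_0-x_l)}{b(x_0-x_l)}\displaystyle\prod_{k=1}^La(x_0-\mu_k)\prod_{\substack{k=1\\k\ne l}}^L\frac{a(x_k-x_0)}{b(x_k-x_0)} & i=0,\ l\ne0,\\[2ex] \displaystyle\prod_{k=1}^Lb(x_l-\mu_k)-\prod_{k=1}^La(x_l-\mu_k)\prod_{\substack{k=0\\k\ne l}}^L\frac{a(x_k-x_l)}{b(x_k-x_l)} & i=l,\\[2ex] \dfrac{c(x_i-x_l)}{b(x_i-x_l)}\displaystyle\prod_{k=1}^La(x_i-\mu_k)\prod_{\substack{k=0\\k\ne i,l}}^L\frac{a(x_k-x_i)}{b(x_k-x_i)} & \text{otherwise.}\end{cases} \]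
   Context: Six-vertex setup. Fix $\gamma\in\mathbb C$, $L\ge1$ and $\mu_1,\dots,\mu_L\in\mathbb C$. Let $a(x)=\sinh(x+\gamma)$, $b(x)=\sinh x$, $c(x)=\sinh\gamma$ (constant). With $v_1,v_2$ the standard basis of $\mathbb C^2$, let $R(x)$ be the matrix on $\mathbb C^2\otimes\mathbb C^2$ which in the ordered basis $v_1\otimes v_1,v_1\otimes v_2,v_2\otimes v_1,v_2\otimes v_2$ is $\begin{pmatrix}a(x)&0&0&0\\0&b(x)&c(x)&0\\0&c(x)&b(x)&0\\0&0&0&a(x)\end{pmatrix}$. On $\mathbb C^2_0\otimes(\mathbb C^2)^{\otimes L}$, let $T_0(x)=R_{01}(x-\mu_1)R_{02}(x-\mu_2)\cdots R_{0L}(x-\mu_L)$ (with $R_{0i}$ acting on the auxiliary factor $0$ and quantum factor $i$), written in the auxiliary space as $\begin{pmatrix}A(x)&B(x)\\C(x)&D(x)\end{pmatrix}$. With $|0\rangle=v_1^{\otimes L}$ and $\langle\bar0|=(v_2^* )^{\otimes L}$, the partition function of the six-vertex model with domain-wall boundaries is $Z(x_1,\dots,x_L)=\langle\bar0|B(x_1)B(x_2)\cdots B(x_L)|0\rangle$. Notation: $X=(x_1,\dots,x_L)$; for $1\le i\le L$, $X_i^0$ is $X$ with $x_i$ replaced by $x_0$. *)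

theory Defs
  imports Complex_Main
begin

definition wa :: "complex \<Rightarrow> complex \<Rightarrow> complex" where
  "wa \<gamma> x = sinh (x + \<gamma>)"
definition wb :: "complex \<Rightarrow> complex" where
  "wb x = sinh x"
definition wc :: "complex \<Rightarrow> complex \<Rightarrow> complex" where
  "wc \<gamma> x = sinh \<gamma>"

text \<open>Basis of C^2: False stands for v1, True stands for v2.
  Rmat g x i' j' i j is the matrix entry of R(x) with row v_i' (x) v_j'
  and column v_i (x) v_j, the first factor being the auxiliary space.\<close>
definition Rmat :: "complex \<Rightarrow> complex \<Rightarrow> bool \<Rightarrow> bool \<Rightarrow> bool \<Rightarrow> bool \<Rightarrow> complex" where
  "Rmat g x i' j' i j =
     (if i' = i \<and> j' = j then (if i = j then wa g x else wb x)
      else if i' = j \<and> j' = i then wc g x else 0)"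

text \<open>Matrix entries of the monodromy matrix
  T_0(x) = R_01(x-mu_1) R_02(x-mu_2) ... R_0L(x-mu_L):
  mono g x mus a' a s' s is the entry with auxiliary row a', auxiliary column a,
  quantum row state s' and quantum column state s (lists of basis labels).\<close>
fun mono :: "complex \<Rightarrow> complex \<Rightarrow> complex list \<Rightarrow> bool \<Rightarrow> bool \<Rightarrow> bool list \<Rightarrow> bool list \<Rightarrow> complex" where
  "mono g x [] a' a [] [] = (if a' = a then 1 else 0)"
| "mono g x (m # ms) a' a (t' # ts') (t # ts) =
     (\<Sum>c\<in>(UNIV::bool set). Rmat g (x - m) a' t' c t * mono g x ms c a ts' ts)"
| "mono g x _ a' a _ _ = 0"

text \<open>Entries of B(x) = upper right block (row v1, column v2) of T_0(x).\<close>
definition Bop :: "complex \<Rightarrow> complex list \<Rightarrow> complex \<Rightarrow> bool list \<Rightarrow> bool list \<Rightarrow> complex" where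
  "Bop g mus x s' s = mono g x mus False True s' s"

definition states :: "nat \<Rightarrow> bool list set" where
  "states L = {s. length s = L}"

fun Bprod :: "complex \<Rightarrow> complex list \<Rightarrow> complex list \<Rightarrow> bool list \<Rightarrow> bool list \<Rightarrow> complex" where
  "Bprod g mus [] s' s = (if s' = s then 1 else 0)"
| "Bprod g mus (x # xs) s' s =
     (\<Sum>u\<in>states (length mus). Bop g mus x s' u * Bprod g mus xs u s)"

text \<open>Partition function Z(x_1..x_L) = <0bar| B(x_1) ... B(x_L) |0>,
  with |0> = v1^{(x) L} and <0bar| = (v2^* )^{(x) L}; inhomogeneities mu_1..mu_L.\<close>
definition Zpf :: "complex \<Rightarrow> nat \<Rightarrow> (nat \<Rightarrow> complex) \<Rightarrow> complex list \<Rightarrow> complex" where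
  "Zpf g L mu xs = Bprod g (map mu [1..<L+1]) xs (replicate L True) (replicate L False)"

text \<open>Z(X_i^0): the argument list (x_1..x_L) with x_i replaced by x_0 (for i = 0 it is X).\<close>
definition ZX :: "complex \<Rightarrow> nat \<Rightarrow> (nat \<Rightarrow> complex) \<Rightarrow> (nat \<Rightarrow> complex) \<Rightarrow> nat \<Rightarrow> complex" where
  "ZX g L mu x i = Zpf g L mu (map (\<lambda>k. if k = i then x 0 else x k) [1..<L+1])"

definition sigma :: "complex \<Rightarrow> nat \<Rightarrow> (nat \<Rightarrow> complex) \<Rightarrow> (nat \<Rightarrow> complex) \<Rightarrow> nat \<Rightarrow> nat \<Rightarrow> complex" where
  "sigma g L mu x l i =
    (if i = 0 \<and> l \<noteq> 0 then
       wc g (x 0 - x l) / wb (x 0 - x l) * (\<Prod>k=1..L. wa g (x 0 - mu k))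
         * (\<Prod>k\<in>{1..L} - {l}. wa g (x k - x 0) / wb (x k - x 0))
     else if i = l then
       (\<Prod>k=1..L. wb (x l - mu k))
         - (\<Prod>k=1..L. wa g (x l - mu k)) * (\<Prod>k\<in>{0..L} - {l}. wa g (x k - x l) / wb (x k - x l))
     else
       wc g (x i - x l) / wb (x i - x l) * (\<Prod>k=1..L. wa g (x i - mu k))
         * (\<Prod>k\<in>{0..L} - {i, l}. wa g (x k - x i) / wb (x k - x i)))"

end

theory Submission
  imports Defs "HOL-Library.Multiset" "HOL-Combinatorics.Transposition"
begin

text \<open>Evaluate <0bar| A(x0) B(x1) ... B(xL) |0> in two ways. The dual vacuum <0bar| is a
  left eigenvector of A(x0) with eigenvalue prod_k b(x0 - mu_k), which gives
  prod_k b(x0 - mu_k) Z(X). Alternatively, A(x0) is moved to the right through the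
  B-operators with the A-B exchange relation, a component of the RTT relation, which follows
  from the Yang-Baxter equation by induction on the number of sites. Since |0> is an
  eigenvector of every A(x) and the B-operators commute, this produces the "wanted" term
  with Z(X) and one "unwanted" term with Z(X_i^0) for each i; comparing the two
  evaluations is the identity for l = 0. As Z is a symmetric function, the identity for
  general l is the one for l = 0 with x0 and xl exchanged.\<close>

lemma sum_UNIV_bool: "(\<Sum>b\<in>(UNIV::bool set). f b) = f False + f True"
  by (simp add: UNIV_bool)

lemma states_0: "states 0 = {[]}"
  by (auto simp: states_def)

lemma states_Suc: "states (Suc n) = (\<lambda>(v, vs). v # vs) ` (UNIV \<times> states n)"
  by (auto simp: states_def image_iff length_Suc_conv)

lemma finite_states [simp]: "finite (states n)"
  by (induction n) (simp_all add: states_0 states_Suc)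

lemma sum_states_Suc:
  "(\<Sum>u\<in>states (Suc n). h u) = (\<Sum>v\<in>UNIV. \<Sum>vs\<in>states n. h (v # vs))"
proof -
  have "inj_on (\<lambda>(v, vs). v # vs) (UNIV \<times> states n)"
    by (auto simp: inj_on_def)
  then show ?thesis
    unfolding states_Suc by (simp add: sum.reindex sum.cartesian_product split_def)
qed

lemma sinh_of_real: "sinh (of_real r :: complex) = of_real (sinh r)"
  by (simp add: sinh_field_def exp_of_real flip: of_real_minus)

lemma sinh_add_of_real_eq_0:
  fixes a :: complex
  assumes "sinh a = 0" and "sinh (a + of_real r) = 0"
  shows "r = 0"
proof -
  have "cosh a ^ 2 = 1"
    using cosh_square_eq[of a] assms(1) by simp
  then have "cosh a \<noteq> 0" by auto
  moreover have "sinh (a + of_real r) = cosh a * of_real (sinh r)"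
    using assms(1) by (simp add: sinh_add sinh_of_real)
  ultimately show ?thesis
    using assms(2) by simp
qed

lemma weights_three_term:
  "wa g u * wb (u - v) + wc g u * wb v = wa g (u - v) * wb u"
proof -
  have "cosh u ^ 2 = sinh u ^ 2 + 1" by (rule cosh_square_eq)
  then show ?thesis
    unfolding wa_def wb_def wc_def sinh_add sinh_diff cosh_add cosh_diff by algebra
qed

lemma Rmat_yang_baxter:
  "(\<Sum>c\<in>UNIV. \<Sum>d\<in>UNIV. \<Sum>v\<in>UNIV. Rmat g (x - y) a b c d * Rmat g (x - m) c t' c1 v * Rmat g (y - m) d v d1 t)
 = (\<Sum>p\<in>UNIV. \<Sum>q\<in>UNIV. \<Sum>w\<in>UNIV. Rmat g (y - m) b t' q w * Rmat g (x - m) a w p t * Rmat g (x - y) p q c1 d1)"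
  by (cases a; cases b; cases t'; cases c1; cases d1; cases t)
     (simp_all add: sum_UNIV_bool Rmat_def wa_def wb_def wc_def sinh_field_def exp_diff exp_add exp_minus field_simps)

definition mono_mul ::
    "complex \<Rightarrow> complex \<Rightarrow> complex \<Rightarrow> complex list \<Rightarrow>
      bool \<Rightarrow> bool \<Rightarrow> bool \<Rightarrow> bool \<Rightarrow> bool list \<Rightarrow> bool list \<Rightarrow> complex"
  where "mono_mul g x y ms a b c d s' s =
    (\<Sum>u\<in>states (length ms). mono g x ms a b s' u * mono g y ms c d u s)"

lemma mono_mul_Cons:
  "mono_mul g x y (m # ms) a b c d (t' # ts') (t # ts) =
   (\<Sum>v\<in>UNIV. \<Sum>a1\<in>UNIV. \<Sum>c1\<in>UNIV.
      Rmat g (x - m) a t' a1 v * Rmat g (y - m) c v c1 t * mono_mul g x y ms a1 b c1 d ts' ts)"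
proof -
  let ?S = "states (length ms)"
  have "mono_mul g x y (m # ms) a b c d (t' # ts') (t # ts) =
    (\<Sum>v\<in>UNIV. \<Sum>vs\<in>?S. \<Sum>a1\<in>UNIV. \<Sum>c1\<in>UNIV. Rmat g (x - m) a t' a1 v * Rmat g (y - m) c v c1 t *
       (mono g x ms a1 b ts' vs * mono g y ms c1 d vs ts))"
    unfolding mono_mul_def
    by (simp only: length_Cons sum_states_Suc mono.simps sum_product) (simp add: ac_simps)
  also have "\<dots> = (\<Sum>v\<in>UNIV. \<Sum>a1\<in>UNIV. \<Sum>c1\<in>UNIV. \<Sum>vs\<in>?S. Rmat g (x - m) a t' a1 v * Rmat g (y - m) c v c1 t *
       (mono g x ms a1 b ts' vs * mono g y ms c1 d vs ts))"
    by (intro sum.cong refl sum.swap[THEN trans] sum.cong refl sum.swap)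
  also have "\<dots> = (\<Sum>v\<in>UNIV. \<Sum>a1\<in>UNIV. \<Sum>c1\<in>UNIV.
      Rmat g (x - m) a t' a1 v * Rmat g (y - m) c v c1 t * mono_mul g x y ms a1 b c1 d ts' ts)"
    unfolding mono_mul_def by (simp add: sum_distrib_left)
  finally show ?thesis .
qed

text \<open>In components: R(x - y) (T(x) \<otimes> T(y)) = (T(y) \<otimes> T(x)) R(x - y), with
  \<open>mono_mul g x y ms a b c d\<close> the operator T(x)_ab T(y)_cd on the quantum space.\<close>
lemma rtt_relation:
  "(\<Sum>c\<in>UNIV. \<Sum>d\<in>UNIV. Rmat g (x - y) a b c d * mono_mul g x y ms c e d f s' s)
 = (\<Sum>c\<in>UNIV. \<Sum>d\<in>UNIV. mono_mul g y x ms b d a c s' s * Rmat g (x - y) c d e f)"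
proof (induction ms arbitrary: a b s' s)
  case Nil
  show ?case
    by (cases s'; cases s; cases a; cases b; cases e; cases f)
       (simp_all add: mono_mul_def states_0 sum_UNIV_bool Rmat_def)
next
  case (Cons m ms)
  show ?case
  proof (cases "s' = [] \<or> s = []")
    case True
    then show ?thesis by (auto simp: mono_mul_def)
  next
    case False
    then obtain t' ts' t ts where s': "s' = t' # ts'" and s: "s = t # ts"
      by (meson neq_Nil_conv)
    let ?R = "Rmat g"
    have "(\<Sum>c\<in>UNIV. \<Sum>d\<in>UNIV. ?R (x - y) a b c d * mono_mul g x y (m # ms) c e d f s' s)
      = (\<Sum>c1\<in>UNIV. \<Sum>d1\<in>UNIV. (\<Sum>c\<in>UNIV. \<Sum>d\<in>UNIV. \<Sum>v\<in>UNIV.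
           ?R (x - y) a b c d * ?R (x - m) c t' c1 v * ?R (y - m) d v d1 t) * mono_mul g x y ms c1 e d1 f ts' ts)"
      unfolding s' s by (simp add: mono_mul_Cons sum_UNIV_bool algebra_simps)
    also have "\<dots> = (\<Sum>c1\<in>UNIV. \<Sum>d1\<in>UNIV. (\<Sum>p\<in>UNIV. \<Sum>q\<in>UNIV. \<Sum>w\<in>UNIV.
           ?R (y - m) b t' q w * ?R (x - m) a w p t * ?R (x - y) p q c1 d1) * mono_mul g x y ms c1 e d1 f ts' ts)"
      by (simp only: Rmat_yang_baxter)
    also have "\<dots> = (\<Sum>p\<in>UNIV. \<Sum>q\<in>UNIV. \<Sum>w\<in>UNIV. ?R (y - m) b t' q w * ?R (x - m) a w p t *
           (\<Sum>c1\<in>UNIV. \<Sum>d1\<in>UNIV. ?R (x - y) p q c1 d1 * mono_mul g x y ms c1 e d1 f ts' ts))"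
      by (simp add: sum_UNIV_bool algebra_simps)
    also have "\<dots> = (\<Sum>p\<in>UNIV. \<Sum>q\<in>UNIV. \<Sum>w\<in>UNIV. ?R (y - m) b t' q w * ?R (x - m) a w p t *
           (\<Sum>c\<in>UNIV. \<Sum>d\<in>UNIV. mono_mul g y x ms q d p c ts' ts * ?R (x - y) c d e f))"
      by (simp only: Cons.IH)
    also have "\<dots> = (\<Sum>c\<in>UNIV. \<Sum>d\<in>UNIV. mono_mul g y x (m # ms) b d a c s' s * ?R (x - y) c d e f)"
      unfolding s' s by (simp add: mono_mul_Cons sum_UNIV_bool algebra_simps)
    finally show ?thesis .
  qed
qed

definition Aop :: "complex \<Rightarrow> complex list \<Rightarrow> complex \<Rightarrow> bool list \<Rightarrow> bool list \<Rightarrow> complex" where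
  "Aop g mus x s' s = mono g x mus False False s' s"

definition Avac :: "complex \<Rightarrow> complex list \<Rightarrow> complex \<Rightarrow> complex" where
  "Avac g mus x = prod_list (map (\<lambda>m. wa g (x - m)) mus)"

lemma mono_vacuum:
  "mono g x ms a False s' (replicate (length ms) False) =
     (if a = False \<and> s' = replicate (length ms) False then Avac g ms x else 0)"
proof (induction ms arbitrary: a s')
  case Nil
  then show ?case by (cases s') (auto simp: Avac_def)
next
  case (Cons m ms)
  then show ?case by (cases s') (auto simp: Avac_def sum_UNIV_bool Rmat_def)
qed

lemma mono_dual_vacuum:
  "mono g x ms a False (replicate (length ms) True) s =
     (if a = False \<and> s = replicate (length ms) True then prod_list (map (\<lambda>m. wb (x - m)) ms) else 0)"
proof (induction ms arbitrary: a s)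
  case Nil
  then show ?case by (cases s) auto
next
  case (Cons m ms)
  then show ?case by (cases s) (auto simp: sum_UNIV_bool Rmat_def)
qed

lemma A_B_exchange:
  "wb (x - y) * (\<Sum>u\<in>states (length ms). Aop g ms y s' u * Bop g ms x u s)
   = wa g (x - y) * (\<Sum>u\<in>states (length ms). Bop g ms x s' u * Aop g ms y u s)
   - wc g (x - y) * (\<Sum>u\<in>states (length ms). Bop g ms y s' u * Aop g ms x u s)"
  using rtt_relation[of g x y False False ms True False s' s]
  by (simp add: sum_UNIV_bool Rmat_def mono_mul_def Aop_def Bop_def algebra_simps)

lemma B_B_exchange:
  "wa g (x - y) * (\<Sum>u\<in>states (length ms). Bop g ms x s' u * Bop g ms y u s)
   = wa g (x - y) * (\<Sum>u\<in>states (length ms). Bop g ms y s' u * Bop g ms x u s)"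
  using rtt_relation[of g x y False False ms True True s' s]
  by (simp add: sum_UNIV_bool Rmat_def mono_mul_def Bop_def algebra_simps)

lemma isCont_mono: "isCont (\<lambda>x. mono g x ms a' a s' s) z"
proof (induction ms arbitrary: a' s' s)
  case Nil
  then show ?case by (cases s'; cases s) auto
next
  case (Cons m ms)
  have "isCont (\<lambda>x. Rmat g (x - m) i' j' i j) z" for i' j' i j
    by (cases i'; cases j'; cases i; cases j) (simp_all add: Rmat_def wa_def wb_def wc_def continuous_intros)
  with Cons.IH show ?case
    by (cases s'; cases s) (simp_all add: sum_UNIV_bool continuous_intros)
qed

lemma isCont_eq_0_off_sinh_zeros:
  fixes F :: "complex \<Rightarrow> complex"
  assumes "isCont F z" and F: "\<And>w. sinh (w + c) \<noteq> 0 \<Longrightarrow> F w = 0"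
  shows "F z = 0"
proof -
  define t where "t n = z + of_real (inverse (real (Suc n)))" for n
  have "t \<longlonglongrightarrow> z + of_real 0"
    unfolding t_def by (intro tendsto_intros LIMSEQ_inverse_real_of_nat)
  then have "(\<lambda>n. F (t n)) \<longlonglongrightarrow> F z"
    using assms(1) isCont_tendsto_compose by fastforce
  moreover have "eventually (\<lambda>n. F (t n) = 0) sequentially"
  proof (cases "\<exists>n0. sinh (t n0 + c) = 0")
    case True
    then obtain n0 where n0: "sinh (t n0 + c) = 0" ..
    have "F (t n) = 0" if "n \<noteq> n0" for n
    proof (rule F, rule notI)
      assume "sinh (t n + c) = 0"
      moreover have "t n + c = t n0 + c + of_real (inverse (real (Suc n)) - inverse (real (Suc n0)))"
        by (simp add: t_def)
      ultimately have "inverse (real (Suc n)) - inverse (real (Suc n0)) = 0"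
        using n0 sinh_add_of_real_eq_0 by metis
      with that show False by simp
    qed
    then show ?thesis
      unfolding eventually_sequentially by (metis Suc_n_not_le_n)
  next
    case False
    then show ?thesis using F by auto
  qed
  ultimately show ?thesis
    using tendsto_eventually LIMSEQ_unique by metis
qed

text \<open>The exchange relation only yields the commutation of B-operators where
  \<open>wa g (x - y) \<noteq> 0\<close>; both sides are continuous in \<open>x\<close>, and the zeros of
  \<open>wa g (x - y)\<close> are isolated.\<close>
lemma B_commute:
  "(\<Sum>u\<in>states (length ms). Bop g ms x s' u * Bop g ms y u s)
   = (\<Sum>u\<in>states (length ms). Bop g ms y s' u * Bop g ms x u s)"
proof -
  let ?F = "\<lambda>x. (\<Sum>u\<in>states (length ms). Bop g ms x s' u * Bop g ms y u s)
   - (\<Sum>u\<in>states (length ms). Bop g ms y s' u * Bop g ms x u s)"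
  have "isCont ?F x"
    unfolding Bop_def by (intro continuous_intros isCont_mono)
  moreover have "?F w = 0" if "sinh (w + (g - y)) \<noteq> 0" for w
    using B_B_exchange[of g w y ms s' s] that by (simp add: wa_def algebra_simps)
  ultimately have "?F x = 0"
    by (rule isCont_eq_0_off_sinh_zeros)
  then show ?thesis by simp
qed

lemma Bprod_swap: "Bprod g mus (x # y # zs) = Bprod g mus (y # x # zs)"
proof (intro ext)
  fix s' s
  let ?S = "states (length mus)"
  have "Bprod g mus (x # y # zs) s' s =
      (\<Sum>w\<in>?S. (\<Sum>u\<in>?S. Bop g mus x s' u * Bop g mus y u w) * Bprod g mus zs w s)"
    by (simp add: sum_distrib_left sum_distrib_right mult.assoc) (rule sum.swap)
  also have "\<dots> = (\<Sum>w\<in>?S. (\<Sum>u\<in>?S. Bop g mus y s' u * Bop g mus x u w) * Bprod g mus zs w s)"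
    by (simp only: B_commute)
  also have "\<dots> = Bprod g mus (y # x # zs) s' s"
    by (simp add: sum_distrib_left sum_distrib_right mult.assoc) (rule sum.swap)
  finally show "Bprod g mus (x # y # zs) s' s = Bprod g mus (y # x # zs) s' s" .
qed

lemma Bprod_Cons_cong: "Bprod g mus xs = Bprod g mus ys \<Longrightarrow> Bprod g mus (x # xs) = Bprod g mus (x # ys)"
  by (intro ext) simp

lemma Bprod_move_to_front: "Bprod g mus (ys @ x # zs) = Bprod g mus (x # ys @ zs)"
proof (induction ys)
  case (Cons y ys)
  then have "Bprod g mus (y # ys @ x # zs) = Bprod g mus (y # x # ys @ zs)"
    by (rule Bprod_Cons_cong)
  then show ?case by (simp add: Bprod_swap)
qed simp

lemma Bprod_mset_cong: "mset xs = mset ys \<Longrightarrow> Bprod g mus xs = Bprod g mus ys"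
proof (induction xs arbitrary: ys)
  case (Cons x xs)
  then have "x \<in> set ys"
    by (metis list.set_intros(1) mset_eq_setD)
  then obtain ys1 ys2 where ys: "ys = ys1 @ x # ys2"
    by (meson split_list)
  with Cons.prems have "mset xs = mset (ys1 @ ys2)" by simp
  then have "Bprod g mus (x # xs) = Bprod g mus (x # ys1 @ ys2)"
    by (intro Bprod_Cons_cong Cons.IH)
  then show ?case
    by (simp add: ys Bprod_move_to_front)
qed simp

definition fw :: "complex \<Rightarrow> complex \<Rightarrow> complex" where
  "fw g u = wa g u / wb u"

definition hw :: "complex \<Rightarrow> complex \<Rightarrow> complex" where
  "hw g u = wc g u / wb u"

lemma fw_hw_identity:
  assumes "wb (w - v) \<noteq> 0" "wb (z - v) \<noteq> 0" "wb (z - w) \<noteq> 0"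
  shows "fw g (w - v) * hw g (z - v) - hw g (w - v) * hw g (z - w) = hw g (z - v) * fw g (w - z)"
proof -
  have "wb (z - w) = - wb (w - z)"
    by (simp add: wb_def flip: sinh_minus)
  moreover have "wa g (w - v) * wb (w - z) + wc g (w - v) * wb (z - v) = wa g (w - z) * wb (w - v)"
    using weights_three_term[of g "w - v" "z - v"] by simp
  ultimately show ?thesis
    using assms unfolding fw_def hw_def wc_def by (simp add: field_simps) algebra
qed

definition unwanted_coeff :: "complex \<Rightarrow> complex list \<Rightarrow> complex \<Rightarrow> complex list \<Rightarrow> nat \<Rightarrow> complex" where
  "unwanted_coeff g mus z xs i = - hw g (xs ! i - z) * Avac g mus (xs ! i) *
     (\<Prod>k<length xs. if k = i then 1 else fw g (xs ! k - xs ! i))"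

lemma unwanted_coeff_Cons_0:
  "unwanted_coeff g mus z (w # xs) 0 = - hw g (w - z) * Avac g mus w * (\<Prod>k<length xs. fw g (xs ! k - w))"
  unfolding unwanted_coeff_def by (simp add: prod.lessThan_Suc_shift del: prod.lessThan_Suc)

lemma unwanted_coeff_Cons_Suc:
  assumes "i < length xs" "wb (w - z) \<noteq> 0" "wb (xs ! i - z) \<noteq> 0" "wb (xs ! i - w) \<noteq> 0"
  shows "unwanted_coeff g mus z (w # xs) (Suc i) =
    fw g (w - z) * unwanted_coeff g mus z xs i - hw g (w - z) * unwanted_coeff g mus w xs i"
proof -
  define Q where "Q = (\<Prod>k<length xs. if k = i then 1 else fw g (xs ! k - xs ! i))"
  have "unwanted_coeff g mus z (w # xs) (Suc i) =
      - Avac g mus (xs ! i) * Q * (hw g (xs ! i - z) * fw g (w - xs ! i))"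
    unfolding unwanted_coeff_def Q_def
    by (simp add: prod.lessThan_Suc_shift del: prod.lessThan_Suc cong: if_cong)
  also have "\<dots> = - Avac g mus (xs ! i) * Q * (fw g (w - z) * hw g (xs ! i - z) - hw g (w - z) * hw g (xs ! i - w))"
    using fw_hw_identity[of w z "xs ! i" g] assms by simp
  finally show ?thesis
    unfolding unwanted_coeff_def Q_def by (simp add: algebra_simps)
qed

lemma sum_unwanted_coeff_Cons_Suc:
  assumes "wb (w - z) \<noteq> 0" "\<forall>i<length xs. wb (xs ! i - z) \<noteq> 0" "\<forall>i<length xs. wb (xs ! i - w) \<noteq> 0"
  shows "(\<Sum>i<length xs. unwanted_coeff g mus z (w # xs) (Suc i) * V i) =
      fw g (w - z) * (\<Sum>i<length xs. unwanted_coeff g mus z xs i * V i)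
    - hw g (w - z) * (\<Sum>i<length xs. unwanted_coeff g mus w xs i * V i)"
proof -
  have "(\<Sum>i<length xs. unwanted_coeff g mus z (w # xs) (Suc i) * V i) =
      (\<Sum>i<length xs. (fw g (w - z) * unwanted_coeff g mus z xs i - hw g (w - z) * unwanted_coeff g mus w xs i) * V i)"
    using assms by (intro sum.cong) (simp_all add: unwanted_coeff_Cons_Suc)
  then show ?thesis
    by (simp add: sum_subtractf sum_distrib_left left_diff_distrib mult.assoc)
qed

definition ABvac :: "complex \<Rightarrow> complex list \<Rightarrow> complex \<Rightarrow> complex list \<Rightarrow> bool list \<Rightarrow> complex" where
  "ABvac g mus z xs s' =
     (\<Sum>u\<in>states (length mus). Aop g mus z s' u * Bprod g mus xs u (replicate (length mus) False))"

lemma ABvac_Cons: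
  assumes "wb (w - z) \<noteq> 0"
  shows "ABvac g mus z (w # xs) s' =
      fw g (w - z) * (\<Sum>u\<in>states (length mus). Bop g mus w s' u * ABvac g mus z xs u)
    - hw g (w - z) * (\<Sum>u\<in>states (length mus). Bop g mus z s' u * ABvac g mus w xs u)"
proof -
  let ?S = "states (length mus)"
  let ?V = "\<lambda>v. Bprod g mus xs v (replicate (length mus) False)"
  have exchange: "(\<Sum>u\<in>?S. Aop g mus z s' u * Bop g mus w u v) =
      fw g (w - z) * (\<Sum>u\<in>?S. Bop g mus w s' u * Aop g mus z u v)
    - hw g (w - z) * (\<Sum>u\<in>?S. Bop g mus z s' u * Aop g mus w u v)" for s' v
    using A_B_exchange[where x = w and y = z and ms = mus and s' = s' and s = v] assms
    unfolding fw_def hw_def by (simp add: field_simps)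
  have "ABvac g mus z (w # xs) s' = (\<Sum>v\<in>?S. (\<Sum>u\<in>?S. Aop g mus z s' u * Bop g mus w u v) * ?V v)"
    unfolding ABvac_def by (simp add: sum_distrib_left sum_distrib_right mult.assoc) (rule sum.swap)
  also have "\<dots> = fw g (w - z) * (\<Sum>u\<in>?S. Bop g mus w s' u * (\<Sum>v\<in>?S. Aop g mus z u v * ?V v))
     - hw g (w - z) * (\<Sum>u\<in>?S. Bop g mus z s' u * (\<Sum>v\<in>?S. Aop g mus w u v * ?V v))"
    unfolding exchange
    by (simp add: sum_distrib_left sum_distrib_right algebra_simps sum_subtractf)
       (subst (1 2) sum.swap, rule refl)
  finally show ?thesis
    unfolding ABvac_def .
qed

lemma Bprod_Cons_linear:
  "(\<Sum>u\<in>states (length mus). Bop g mus y s' u * (\<alpha> * Bprod g mus ys u v + (\<Sum>i<n. \<beta> i * Bprod g mus (zs i) u v)))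
   = \<alpha> * Bprod g mus (y # ys) s' v + (\<Sum>i<n. \<beta> i * Bprod g mus (y # zs i) s' v)"
  by (simp add: distrib_left sum.distrib sum_distrib_left algebra_simps) (rule sum.swap)

lemma ABvac_expansion:
  assumes "\<forall>i<length xs. wb (xs ! i - z) \<noteq> 0"
    and "\<forall>i<length xs. \<forall>j<length xs. i \<noteq> j \<longrightarrow> wb (xs ! i - xs ! j) \<noteq> 0"
  shows "ABvac g mus z xs s' =
      Avac g mus z * (\<Prod>k<length xs. fw g (xs ! k - z)) * Bprod g mus xs s' (replicate (length mus) False)
    + (\<Sum>i<length xs. unwanted_coeff g mus z xs i * Bprod g mus (xs[i := z]) s' (replicate (length mus) False))"
  using assms
proof (induction xs arbitrary: z s')
  case Nil
  then show ?case
    by (simp add: ABvac_def Aop_def mono_vacuum if_distrib[of "\<lambda>v. _ * v"] sum.delta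
        cong: if_cong) (simp add: states_def)
next
  case (Cons w xs)
  let ?V = "\<lambda>ys. Bprod g mus ys s' (replicate (length mus) False)"
  let ?n = "length xs"
  have wz: "wb (w - z) \<noteq> 0" and xz: "\<forall>i<?n. wb (xs ! i - z) \<noteq> 0"
    and xw: "\<forall>i<?n. wb (xs ! i - w) \<noteq> 0"
    and xx: "\<forall>i<?n. \<forall>j<?n. i \<noteq> j \<longrightarrow> wb (xs ! i - xs ! j) \<noteq> 0"
    using Cons.prems by (simp_all add: All_less_Suc2)
  have expand: "ABvac g mus z (w # xs) s' =
      fw g (w - z) * (Avac g mus z * (\<Prod>k<?n. fw g (xs ! k - z)) * ?V (w # xs)
        + (\<Sum>i<?n. unwanted_coeff g mus z xs i * ?V (w # xs[i := z])))
    - hw g (w - z) * (Avac g mus w * (\<Prod>k<?n. fw g (xs ! k - w)) * ?V (z # xs)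
        + (\<Sum>i<?n. unwanted_coeff g mus w xs i * ?V (z # xs[i := w])))"
    by (simp only: ABvac_Cons[OF wz] Cons.IH[OF xz xx] Cons.IH[OF xw xx] Bprod_Cons_linear)
  have swap: "Bprod g mus (z # xs[i := w]) = Bprod g mus (w # xs[i := z])" if "i < ?n" for i
    using that by (intro Bprod_mset_cong) (simp add: mset_update add_mset_commute)
  have reorder: "(\<Sum>i<?n. unwanted_coeff g mus w xs i * ?V (z # xs[i := w]))
      = (\<Sum>i<?n. unwanted_coeff g mus w xs i * ?V (w # xs[i := z]))"
    by (rule sum.cong) (simp_all add: swap)
  show ?case
    unfolding expand reorder
    by (simp add: unwanted_coeff_Cons_0 sum_unwanted_coeff_Cons_Suc[OF wz xz xw]
        prod.lessThan_Suc_shift sum.lessThan_Suc_shift del: prod.lessThan_Suc sum.lessThan_Suc Bprod.simps)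
      (simp add: algebra_simps)
qed

lemma ABvac_dual_vacuum:
  "ABvac g mus z xs (replicate (length mus) True) =
     prod_list (map (\<lambda>m. wb (z - m)) mus) *
     Bprod g mus xs (replicate (length mus) True) (replicate (length mus) False)"
  by (simp add: ABvac_def Aop_def mono_dual_vacuum if_distrib[of "\<lambda>v. v * _"] sum.delta
      cong: if_cong) (simp add: states_def)

lemma prod_list_map_upt: "prod_list (map f [Suc 0..<Suc L]) = (\<Prod>k=1..L. f k)"
  by (induction L) simp_all

lemma prod_lessThan_skip_Suc:
  assumes "i < L"
  shows "(\<Prod>k<L. if k = i then 1 else f (Suc k)) = (\<Prod>k\<in>{0..L} - {Suc i, 0}. f k)"
proof -
  have "(\<Prod>k<L. if k = i then 1 else f (Suc k)) = (\<Prod>k\<in>{..<L} - {i}. f (Suc k))"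
    using assms by (simp add: prod.If_cases Int_absorb1 Diff_eq)
  also have "\<dots> = (\<Prod>k\<in>Suc ` ({..<L} - {i}). f k)"
    by (simp add: prod.reindex)
  also have "Suc ` ({..<L} - {i}) = {0..L} - {Suc i, 0}"
  proof
    show "{0..L} - {Suc i, 0} \<subseteq> Suc ` ({..<L} - {i})"
    proof
      fix k assume "k \<in> {0..L} - {Suc i, 0}"
      then show "k \<in> Suc ` ({..<L} - {i})" by (cases k) auto
    qed
  qed auto
  finally show ?thesis .
qed

lemma Avac_map_upt: "Avac g (map mu [1..<L+1]) y = (\<Prod>k=1..L. wa g (y - mu k))"
  unfolding Avac_def using prod_list_map_upt[of "\<lambda>k. wa g (y - mu k)" L]
  by (simp add: comp_def del: upt_Suc)

lemma prod_fw_map_upt: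
  "(\<Prod>k<L. fw g (map x [1..<L+1] ! k - x 0)) = (\<Prod>k\<in>{0..L} - {0}. wa g (x k - x 0) / wb (x k - x 0))"
proof -
  have "{0..L} - {0} = {Suc 0..L}" by auto
  then show ?thesis by (simp add: prod.atLeast1_atMost_eq nth_map_upt fw_def del: upt_Suc)
qed

lemma unwanted_coeff_map_upt:
  assumes "i < L"
  shows "unwanted_coeff g (map mu [1..<L+1]) (x 0) (map x [1..<L+1]) i = - sigma g L mu x 0 (Suc i)"
proof -
  have "(\<Prod>k<length (map x [1..<L+1]). if k = i then 1 else fw g (map x [1..<L+1] ! k - map x [1..<L+1] ! i))
      = (\<Prod>k<L. if k = i then 1 else fw g (x (Suc k) - x (Suc i)))"
    using assms by (intro prod.cong) (simp_all add: nth_map_upt del: upt_Suc)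
  also have "\<dots> = (\<Prod>k\<in>{0..L} - {Suc i, 0}. wa g (x k - x (Suc i)) / wb (x k - x (Suc i)))"
    unfolding fw_def by (rule prod_lessThan_skip_Suc[OF assms])
  finally have skip: "(\<Prod>k<length (map x [1..<L+1]). if k = i then 1 else fw g (map x [1..<L+1] ! k - map x [1..<L+1] ! i))
      = (\<Prod>k\<in>{0..L} - {Suc i, 0}. wa g (x k - x (Suc i)) / wb (x k - x (Suc i)))" .
  show ?thesis
    unfolding unwanted_coeff_def Avac_map_upt skip sigma_def using assms
    by (simp add: nth_map_upt hw_def del: upt_Suc)
qed

lemma ZX_0_eq: "ZX g L mu x 0 = Zpf g L mu (map x [1..<L+1])"
proof -
  have "map (\<lambda>k. if k = 0 then x 0 else x k) [1..<L+1] = map x [1..<L+1]"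
    by (rule map_cong) auto
  then show ?thesis
    unfolding ZX_def by (rule arg_cong)
qed

lemma ZX_Suc_eq:
  assumes "i < L"
  shows "ZX g L mu x (Suc i) = Zpf g L mu ((map x [1..<L+1])[i := x 0])"
proof -
  have "map (\<lambda>k. if k = Suc i then x 0 else x k) [1..<L+1] = (map x [1..<L+1])[i := x 0]"
    by (rule nth_equalityI) (auto simp: nth_list_update nth_upt simp del: upt_Suc)
  then show ?thesis
    unfolding ZX_def by (rule arg_cong)
qed

lemma sigma_0_identity:
  fixes g :: complex and L :: nat and mu x :: "nat \<Rightarrow> complex"
  assumes generic: "\<And>j k. j \<le> L \<Longrightarrow> k \<le> L \<Longrightarrow> j \<noteq> k \<Longrightarrow> wb (x j - x k) \<noteq> 0"
  shows "(\<Sum>i=0..L. sigma g L mu x 0 i * ZX g L mu x i) = 0"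
proof -
  define mus where "mus = map mu [1..<L+1]"
  define xs where "xs = map x [1..<L+1]"
  define dual where "dual = replicate L True"
  define vac where "vac = replicate L False"
  have nth_xs: "i < L \<Longrightarrow> xs ! i = x (Suc i)" and length: "length mus = L" "length xs = L" for i
    unfolding xs_def mus_def by (simp_all add: nth_map_upt del: upt_Suc)
  have "\<forall>i<length xs. wb (xs ! i - x 0) \<noteq> 0"
    and "\<forall>i<length xs. \<forall>j<length xs. i \<noteq> j \<longrightarrow> wb (xs ! i - xs ! j) \<noteq> 0"
    using generic by (simp_all add: length nth_xs)
  then have "ABvac g mus (x 0) xs dual =
      Avac g mus (x 0) * (\<Prod>k<L. fw g (xs ! k - x 0)) * Bprod g mus xs dual vac
    + (\<Sum>i<L. unwanted_coeff g mus (x 0) xs i * Bprod g mus (xs[i := x 0]) dual vac)"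
    by (simp add: ABvac_expansion length vac_def)
  moreover have "ABvac g mus (x 0) xs dual = (\<Prod>k=1..L. wb (x 0 - mu k)) * Bprod g mus xs dual vac"
    using ABvac_dual_vacuum[of g mus "x 0" xs] prod_list_map_upt[of "\<lambda>k. wb (x 0 - mu k)" L]
    by (simp add: length dual_def vac_def mus_def comp_def del: upt_Suc)
  moreover have "Avac g mus y = (\<Prod>k=1..L. wa g (y - mu k))" for y
    unfolding mus_def by (rule Avac_map_upt)
  moreover have "(\<Prod>k<L. fw g (xs ! k - x 0)) = (\<Prod>k\<in>{0..L} - {0}. wa g (x k - x 0) / wb (x k - x 0))"
    unfolding xs_def by (rule prod_fw_map_upt)
  moreover have "unwanted_coeff g mus (x 0) xs i = - sigma g L mu x 0 (Suc i)" if "i < L" for i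
    unfolding mus_def xs_def using that by (rule unwanted_coeff_map_upt)
  moreover have "ZX g L mu x 0 = Bprod g mus xs dual vac"
    unfolding ZX_0_eq Zpf_def mus_def xs_def dual_def vac_def ..
  moreover have "ZX g L mu x (Suc i) = Bprod g mus (xs[i := x 0]) dual vac" if "i < L" for i
    unfolding ZX_Suc_eq[OF that] Zpf_def mus_def xs_def dual_def vac_def ..
  ultimately have "sigma g L mu x 0 0 * ZX g L mu x 0 + (\<Sum>i<L. sigma g L mu x 0 (Suc i) * ZX g L mu x (Suc i)) = 0"
    by (simp add: sigma_def sum_negf algebra_simps)
  moreover have "{0..L} = insert 0 {Suc 0..L}" by auto
  ultimately show ?thesis
    by (simp add: sum.atLeast1_atMost_eq)
qed

lemma mset_ZX_args:
  assumes "i \<le> L"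
  shows "mset (map (\<lambda>k. if k = i then x 0 else x k) [1..<L+1]) = image_mset x (mset_set ({0..L} - {i}))"
proof -
  define h where "h k = (if k = i then 0 else k)" for k :: nat
  have "(\<lambda>k. if k = i then x 0 else x k) = x \<circ> h"
    by (auto simp: h_def)
  then have "mset (map (\<lambda>k. if k = i then x 0 else x k) [1..<L+1]) = image_mset x (image_mset h (mset_set {1..<L+1}))"
    by (simp only: mset_map mset_upt multiset.map_comp)
  also have "\<dots> = image_mset x (mset_set (h ` {1..<L+1}))"
    by (subst image_mset_mset_set) (auto simp: h_def inj_on_def)
  also have "h ` {1..<L+1} = {0..L} - {i}"
    using assms by (auto simp: h_def image_iff Bex_def split: if_splits)
  finally show ?thesis .
qed

lemma ZX_transpose:
  assumes "l \<le> L" "i \<le> L"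
  shows "ZX g L mu (x \<circ> Transposition.transpose 0 l) (Transposition.transpose 0 l i) = ZX g L mu x i"
proof -
  let ?t = "Transposition.transpose (0::nat) l"
  have "?t ` ({0..L} - {?t i}) = {0..L} - {i}"
    using assms by (simp add: image_set_diff inj_transpose)
  then have "image_mset (x \<circ> ?t) (mset_set ({0..L} - {?t i})) = image_mset x (mset_set ({0..L} - {i}))"
    by (simp add: image_mset_mset_set flip: multiset.map_comp)
  moreover have "?t i \<le> L"
    using assms by (simp add: transpose_def)
  ultimately have args: "mset (map (\<lambda>k. if k = ?t i then (x \<circ> ?t) 0 else (x \<circ> ?t) k) [1..<L+1])
      = mset (map (\<lambda>k. if k = i then x 0 else x k) [1..<L+1])"
    using assms by (simp only: mset_ZX_args)
  then show ?thesis
    unfolding ZX_def Zpf_def by (simp only: Bprod_mset_cong[OF args])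
qed

lemma prod_transpose_diff:
  assumes "a \<in> A" "b \<in> A"
  shows "(\<Prod>k\<in>A - B. f (Transposition.transpose a b k)) = (\<Prod>k\<in>A - Transposition.transpose a b ` B. f k)"
proof -
  have "(\<Prod>k\<in>A - B. f (Transposition.transpose a b k)) = (\<Prod>k\<in>Transposition.transpose a b ` (A - B). f k)"
    by (simp add: prod.reindex)
  also have "Transposition.transpose a b ` (A - B) = A - Transposition.transpose a b ` B"
    using assms by (simp add: image_set_diff inj_transpose)
  finally show ?thesis .
qed

lemma sigma_transpose:
  assumes "l \<le> L" "i \<le> L"
  shows "sigma g L mu (x \<circ> Transposition.transpose 0 l) 0 (Transposition.transpose 0 l i) = sigma g L mu x l i"
proof (cases "l = 0")
  case True
  then show ?thesis by simp
next
  case False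
  let ?t = "Transposition.transpose 0 l"
  have reindex: "(\<Prod>k\<in>{0..L} - B. f (?t k)) = (\<Prod>k\<in>{0..L} - ?t ` B. f k)" for B and f :: "nat \<Rightarrow> complex"
    using assms by (intro prod_transpose_diff) auto
  consider "i = 0" | "i = l" | "i \<noteq> 0" "i \<noteq> l" by blast
  then show ?thesis
  proof cases
    case 1
    have "{0..L} - {0, l} = {1..L} - {l}" by auto
    then show ?thesis
      unfolding sigma_def using 1 False reindex[where B = "{l, 0}" and f = "\<lambda>k. wa g (x k - x 0) / wb (x k - x 0)"]
      by (simp add: insert_commute)
  next
    case 2
    then show ?thesis
      unfolding sigma_def using False reindex[where B = "{0}" and f = "\<lambda>k. wa g (x k - x l) / wb (x k - x l)"] by simp
  next
    case 3
    then show ?thesis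
      unfolding sigma_def using reindex[where B = "{i, 0}" and f = "\<lambda>k. wa g (x k - x i) / wb (x k - x i)"]
      by (simp add: insert_commute)
  qed
qed

theorem corollary6p1:
  fixes g :: complex and L :: nat and mu x :: "nat \<Rightarrow> complex"
  assumes "L \<ge> 1"
    and generic: "\<And>j k. j \<le> L \<Longrightarrow> k \<le> L \<Longrightarrow> j \<noteq> k \<Longrightarrow> wb (x j - x k) \<noteq> 0"
    and "l \<le> L"
  shows "(\<Sum>i=0..L. sigma g L mu x l i * ZX g L mu x i) = 0"
proof -
  let ?t = "Transposition.transpose 0 l"
  let ?y = "x \<circ> ?t"
  have range_t: "?t ` {0..L} = {0..L}"
    using \<open>l \<le> L\<close> by simp
  have "(\<Sum>i=0..L. sigma g L mu x l i * ZX g L mu x i)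
      = (\<Sum>i=0..L. sigma g L mu ?y 0 (?t i) * ZX g L mu ?y (?t i))"
    using \<open>l \<le> L\<close> by (intro sum.cong) (simp_all add: sigma_transpose ZX_transpose)
  also have "\<dots> = (\<Sum>i\<in>?t ` {0..L}. sigma g L mu ?y 0 i * ZX g L mu ?y i)"
    by (simp add: sum.reindex)
  also have "\<dots> = 0"
    unfolding range_t
  proof (rule sigma_0_identity)
    fix j k assume "j \<le> L" "k \<le> L" "j \<noteq> k"
    moreover from \<open>j \<noteq> k\<close> have "?t j \<noteq> ?t k"
      by (metis transpose_involutory)
    ultimately show "wb (?y j - ?y k) \<noteq> 0"
      using \<open>l \<le> L\<close> by (simp add: generic transpose_def)
  qed
  finally show ?thesis .
qed

end
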